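(* Let $\tau$ be a permutation. Let $M_{\tau,top}$ (resp. $M_{\tau,bottom}$) be the quasi-permutation matrix obtained by adding a row of $0$ entries above (resp. below) the permutation matrix of $\tau$, and let $M_{\tau,right}$ (resp. $M_{\tau,left}$) be the matrix obtained by adding a column of $0$ entries to the right (resp. left) of the permutation matrix of $\tau$. Then the permutations of $Av_{\mathfrak{S}}(M_{\tau,top})$ (resp. $Av_{\mathfrak{S}}(M_{\tau,bottom})$, $Av_{\mathfrak{S}}(M_{\tau,right})$, $Av_{\mathfrak{S}}(M_{\tau,left})$) are exactly the permutations obtained from a permutation avoiding $\tau$ by adding a maximal (resp. minimal, resp. last, resp. first) element.
   Context: A permutation $\sigma$ of $\{1,\dots,n\}$ is identified with its permutation matrix $M_\sigma$, with $M_\sigma(i,j)=1$ iff $i=\sigma(j)$ and rows numbered from bottom to top (so "above" means larger values and "right" means larger positions). A matrix is a submatrix of another if obtained by deleting rows and/or columns. A permutation $\sigma$ contains $\pi$ as a pattern iff $M_\pi$ is a submatrix of $M_\sigma$; $\sigma$ avoids $\tau$ otherwise. $Av_{\mathfrak{S}}(M)$ is the set of permutations whose matrix has no submatrix equal to $M$. Adding a maximal element to a permutation $\sigma'$ of size $n$ means forming a permutation of size $n+1$ whose matrix is obtained from $M_{\sigma'}$ by inserting a new top row and a new column (anywhere) with a $1$ at their intersection; adding a minimal, last, or first element is defined analogously (new bottom row, new rightmost column, new leftmost column respectively). *)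

theory Defs
  imports "HOL-Combinatorics.Permutations"
begin

text \<open>0/1 matrices: (number of rows, number of columns, entries).
  Rows and columns are numbered from 1; row 1 is the bottom row, column 1 the leftmost.
  Entries outside the index range are irrelevant.\<close>
type_synonym bmat = "nat \<times> nat \<times> (nat \<Rightarrow> nat \<Rightarrow> bool)"

definition nrows :: "bmat \<Rightarrow> nat" where "nrows A = fst A"
definition ncols :: "bmat \<Rightarrow> nat" where "ncols A = fst (snd A)"
definition ent :: "bmat \<Rightarrow> nat \<Rightarrow> nat \<Rightarrow> bool" where "ent A = snd (snd A)"

definition mat_eq :: "bmat \<Rightarrow> bmat \<Rightarrow> bool" where
  "mat_eq A B \<longleftrightarrow> nrows A = nrows B \<and> ncols A = ncols B \<and>
     (\<forall>i\<in>{1..nrows A}. \<forall>j\<in>{1..ncols A}. ent A i j = ent B i j)"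

definition submatrix :: "bmat \<Rightarrow> bmat \<Rightarrow> bool" where
  "submatrix A B \<longleftrightarrow> (\<exists>r c.
     strict_mono_on {1..nrows A} r \<and> r ` {1..nrows A} \<subseteq> {1..nrows B} \<and>
     strict_mono_on {1..ncols A} c \<and> c ` {1..ncols A} \<subseteq> {1..ncols B} \<and>
     (\<forall>i\<in>{1..nrows A}. \<forall>j\<in>{1..ncols A}. ent A i j = ent B (r i) (c j)))"

definition pmat :: "nat \<Rightarrow> (nat \<Rightarrow> nat) \<Rightarrow> bmat" where
  "pmat n \<sigma> = (n, n, \<lambda>i j. i = \<sigma> j)"

definition contains :: "nat \<Rightarrow> (nat \<Rightarrow> nat) \<Rightarrow> nat \<Rightarrow> (nat \<Rightarrow> nat) \<Rightarrow> bool" where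
  "contains n \<sigma> m \<pi> \<longleftrightarrow> submatrix (pmat m \<pi>) (pmat n \<sigma>)"

definition avoids :: "nat \<Rightarrow> (nat \<Rightarrow> nat) \<Rightarrow> nat \<Rightarrow> (nat \<Rightarrow> nat) \<Rightarrow> bool" where
  "avoids n \<sigma> m \<pi> \<longleftrightarrow> \<not> contains n \<sigma> m \<pi>"

definition Av :: "bmat \<Rightarrow> (nat \<times> (nat \<Rightarrow> nat)) set" where
  "Av M = {(n, \<sigma>). n \<ge> 1 \<and> \<sigma> permutes {1..n} \<and> \<not> submatrix M (pmat n \<sigma>)}"

definition zero_row_top :: "bmat \<Rightarrow> bmat" where
  "zero_row_top A = (nrows A + 1, ncols A, \<lambda>i j. if i = nrows A + 1 then False else ent A i j)"
definition zero_row_bottom :: "bmat \<Rightarrow> bmat" where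
  "zero_row_bottom A = (nrows A + 1, ncols A, \<lambda>i j. if i = 1 then False else ent A (i - 1) j)"
definition zero_col_right :: "bmat \<Rightarrow> bmat" where
  "zero_col_right A = (nrows A, ncols A + 1, \<lambda>i j. if j = ncols A + 1 then False else ent A i j)"
definition zero_col_left :: "bmat \<Rightarrow> bmat" where
  "zero_col_left A = (nrows A, ncols A + 1, \<lambda>i j. if j = 1 then False else ent A i (j - 1))"

definition ins_rc :: "bmat \<Rightarrow> nat \<Rightarrow> nat \<Rightarrow> bmat" where
  "ins_rc A h k = (nrows A + 1, ncols A + 1, \<lambda>i j.
     if i = h \<and> j = k then True
     else if i = h \<or> j = k then False
     else ent A (if i < h then i else i - 1) (if j < k then j else j - 1))"

definition add_max_set :: "nat \<Rightarrow> (nat \<Rightarrow> nat) \<Rightarrow> (nat \<times> (nat \<Rightarrow> nat)) set" where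
  "add_max_set m \<tau> = {(n + 1, \<sigma>) | n \<sigma> \<sigma>' k. \<sigma> permutes {1..n+1} \<and> \<sigma>' permutes {1..n} \<and>
      avoids n \<sigma>' m \<tau> \<and> k \<in> {1..n+1} \<and> mat_eq (pmat (n+1) \<sigma>) (ins_rc (pmat n \<sigma>') (n+1) k)}"
definition add_min_set :: "nat \<Rightarrow> (nat \<Rightarrow> nat) \<Rightarrow> (nat \<times> (nat \<Rightarrow> nat)) set" where
  "add_min_set m \<tau> = {(n + 1, \<sigma>) | n \<sigma> \<sigma>' k. \<sigma> permutes {1..n+1} \<and> \<sigma>' permutes {1..n} \<and>
      avoids n \<sigma>' m \<tau> \<and> k \<in> {1..n+1} \<and> mat_eq (pmat (n+1) \<sigma>) (ins_rc (pmat n \<sigma>') 1 k)}"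
definition add_last_set :: "nat \<Rightarrow> (nat \<Rightarrow> nat) \<Rightarrow> (nat \<times> (nat \<Rightarrow> nat)) set" where
  "add_last_set m \<tau> = {(n + 1, \<sigma>) | n \<sigma> \<sigma>' h. \<sigma> permutes {1..n+1} \<and> \<sigma>' permutes {1..n} \<and>
      avoids n \<sigma>' m \<tau> \<and> h \<in> {1..n+1} \<and> mat_eq (pmat (n+1) \<sigma>) (ins_rc (pmat n \<sigma>') h (n+1))}"
definition add_first_set :: "nat \<Rightarrow> (nat \<Rightarrow> nat) \<Rightarrow> (nat \<times> (nat \<Rightarrow> nat)) set" where
  "add_first_set m \<tau> = {(n + 1, \<sigma>) | n \<sigma> \<sigma>' h. \<sigma> permutes {1..n+1} \<and> \<sigma>' permutes {1..n} \<and>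
      avoids n \<sigma>' m \<tau> \<and> h \<in> {1..n+1} \<and> mat_eq (pmat (n+1) \<sigma>) (ins_rc (pmat n \<sigma>') h 1)}"

end

theory Submission
  imports Defs
begin

text \<open>
  A permutation \<sigma> of size n + 1 is a permutation \<sigma>' of size n with one row and one column
  inserted, crossing in a 1; when the added element is maximal, the new row is the top one.
  The matrix of \<tau> with a zero row on top embeds into that of \<sigma> iff the matrix of \<tau> embeds
  into that of \<sigma>': an embedding sends the zero row strictly above all rows of \<tau>, so no column
  of \<tau>, which always has a 1 below that row, can be sent to the inserted column, whose only 1 is
  in the top row; conversely an occurrence of \<tau> in \<sigma>' extends by sending the zero row to the
  top row. The other three cases follow by reversing the row order and by transposing.
\<close>

lemma bmat_sel [simp]: "nrows (a, b, f) = a" "ncols (a, b, f) = b" "ent (a, b, f) = f"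
  by (simp_all add: nrows_def ncols_def ent_def)

lemma pmat_sel [simp]:
  "nrows (pmat n \<sigma>) = n" "ncols (pmat n \<sigma>) = n" "ent (pmat n \<sigma>) i j \<longleftrightarrow> i = \<sigma> j"
  by (simp_all add: pmat_def)

lemma ins_rc_dims [simp]:
  "nrows (ins_rc A h k) = nrows A + 1" "ncols (ins_rc A h k) = ncols A + 1"
  by (simp_all add: ins_rc_def)

lemma zero_row_dims [simp]:
  "nrows (zero_row_top P) = nrows P + 1" "ncols (zero_row_top P) = ncols P"
  "nrows (zero_row_bottom P) = nrows P + 1" "ncols (zero_row_bottom P) = ncols P"
  by (simp_all add: zero_row_top_def zero_row_bottom_def)

definition embedding :: "(nat \<Rightarrow> nat) \<Rightarrow> (nat \<Rightarrow> nat) \<Rightarrow> bmat \<Rightarrow> bmat \<Rightarrow> bool" where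
  "embedding r c A B \<longleftrightarrow>
     strict_mono_on {1..nrows A} r \<and> (\<forall>i\<in>{1..nrows A}. r i \<in> {1..nrows B}) \<and>
     strict_mono_on {1..ncols A} c \<and> (\<forall>j\<in>{1..ncols A}. c j \<in> {1..ncols B}) \<and>
     (\<forall>i\<in>{1..nrows A}. \<forall>j\<in>{1..ncols A}. ent A i j = ent B (r i) (c j))"

lemma submatrix_iff_embedding: "submatrix A B \<longleftrightarrow> (\<exists>r c. embedding r c A B)"
  by (simp add: submatrix_def embedding_def image_subset_iff)

lemma embeddingI:
  assumes "\<And>a b. a \<in> {1..nrows A} \<Longrightarrow> b \<in> {1..nrows A} \<Longrightarrow> a < b \<Longrightarrow> r a < r b"
    and "\<And>a b. a \<in> {1..ncols A} \<Longrightarrow> b \<in> {1..ncols A} \<Longrightarrow> a < b \<Longrightarrow> c a < c b"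
    and "\<And>i. i \<in> {1..nrows A} \<Longrightarrow> r i \<in> {1..nrows B}"
    and "\<And>j. j \<in> {1..ncols A} \<Longrightarrow> c j \<in> {1..ncols B}"
    and "\<And>i j. i \<in> {1..nrows A} \<Longrightarrow> j \<in> {1..ncols A} \<Longrightarrow> ent A i j = ent B (r i) (c j)"
  shows "embedding r c A B"
  using assms unfolding embedding_def by (auto intro: strict_mono_onI)

lemma
  assumes "embedding r c A B"
  shows embedding_row_less: "a \<in> {1..nrows A} \<Longrightarrow> b \<in> {1..nrows A} \<Longrightarrow> a < b \<Longrightarrow> r a < r b"
    and embedding_col_less: "a \<in> {1..ncols A} \<Longrightarrow> b \<in> {1..ncols A} \<Longrightarrow> a < b \<Longrightarrow> c a < c b"
    and embedding_row_in: "i \<in> {1..nrows A} \<Longrightarrow> r i \<in> {1..nrows B}"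
    and embedding_col_in: "j \<in> {1..ncols A} \<Longrightarrow> c j \<in> {1..ncols B}"
    and embedding_ent: "i \<in> {1..nrows A} \<Longrightarrow> j \<in> {1..ncols A} \<Longrightarrow> ent A i j = ent B (r i) (c j)"
  using assms strict_mono_onD[of "{1..nrows A}" r] strict_mono_onD[of "{1..ncols A}" c]
  unfolding embedding_def by blast+

lemma mat_eq_refl: "mat_eq A A"
  unfolding mat_eq_def by simp

lemma mat_eq_sym: "mat_eq A B \<Longrightarrow> mat_eq B A"
  unfolding mat_eq_def by auto

lemma embedding_mat_eq:
  assumes "embedding r c A B" "mat_eq A A'" "mat_eq B B'"
  shows "embedding r c A' B'"
  using assms unfolding embedding_def mat_eq_def by (simp add: image_subset_iff)

lemma submatrix_mat_eq_cong:
  assumes "mat_eq A A'" "mat_eq B B'"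
  shows "submatrix A B \<longleftrightarrow> submatrix A' B'"
  using embedding_mat_eq assms mat_eq_sym unfolding submatrix_iff_embedding by metis

definition skip :: "nat \<Rightarrow> nat \<Rightarrow> nat" where
  "skip k j = (if j < k then j else Suc j)"

definition unskip :: "nat \<Rightarrow> nat \<Rightarrow> nat" where
  "unskip k j = (if j < k then j else j - 1)"

lemma strict_mono_skip: "strict_mono (skip k)"
  by (rule strict_monoI) (simp add: skip_def)

lemma skip_neq: "skip k j \<noteq> k"
  by (simp add: skip_def)

lemma unskip_skip [simp]: "unskip k (skip k j) = j"
  by (simp add: skip_def unskip_def)

lemma unskip_below: "j < k \<Longrightarrow> unskip k j = j"
  by (simp add: unskip_def)

lemma skip_unskip: "j \<noteq> k \<Longrightarrow> skip k (unskip k j) = j"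
  by (auto simp: skip_def unskip_def)

lemma skip_in: "j \<in> {1..n} \<Longrightarrow> skip k j \<in> {1..n + 1}"
  by (auto simp: skip_def)

lemma unskip_in: "j \<in> {1..n + 1} \<Longrightarrow> k \<in> {1..n + 1} \<Longrightarrow> j \<noteq> k \<Longrightarrow> unskip k j \<in> {1..n}"
  by (auto simp: unskip_def)

lemma unskip_less: "i < j \<Longrightarrow> i \<noteq> k \<Longrightarrow> j \<noteq> k \<Longrightarrow> unskip k i < unskip k j"
  by (auto simp: unskip_def)

lemma unskip_eq_iff: "i \<noteq> k \<Longrightarrow> j \<noteq> k \<Longrightarrow> unskip k i = unskip k j \<longleftrightarrow> i = j"
  by (auto simp: unskip_def)

lemma ent_ins_rc:
  "ent (ins_rc A h k) i j \<longleftrightarrow>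
     (if i = h \<or> j = k then i = h \<and> j = k else ent A (unskip h i) (unskip k j))"
  by (auto simp: ins_rc_def unskip_def)

lemma embedding_ins_rc_avoiding:
  assumes rc: "embedding r c P (ins_rc A h k)"
    and hk: "h \<in> {1..nrows A + 1}" "k \<in> {1..ncols A + 1}"
    and avoid: "\<And>i. i \<in> {1..nrows P} \<Longrightarrow> r i \<noteq> h" "\<And>j. j \<in> {1..ncols P} \<Longrightarrow> c j \<noteq> k"
  shows "embedding (unskip h \<circ> r) (unskip k \<circ> c) P A"
proof (rule embeddingI)
  show "(unskip h \<circ> r) a < (unskip h \<circ> r) b" if "a \<in> {1..nrows P}" "b \<in> {1..nrows P}" "a < b"
    for a b
    using that by (simp add: unskip_less embedding_row_less[OF rc] avoid)
  show "(unskip k \<circ> c) a < (unskip k \<circ> c) b" if "a \<in> {1..ncols P}" "b \<in> {1..ncols P}" "a < b"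
    for a b
    using that by (simp add: unskip_less embedding_col_less[OF rc] avoid)
  show "(unskip h \<circ> r) i \<in> {1..nrows A}" if "i \<in> {1..nrows P}" for i
  proof -
    have "r i \<in> {1..nrows A + 1}" using embedding_row_in[OF rc that] by simp
    then show ?thesis using unskip_in[OF _ hk(1)] avoid(1)[OF that] by simp
  qed
  show "(unskip k \<circ> c) j \<in> {1..ncols A}" if "j \<in> {1..ncols P}" for j
  proof -
    have "c j \<in> {1..ncols A + 1}" using embedding_col_in[OF rc that] by simp
    then show ?thesis using unskip_in[OF _ hk(2)] avoid(2)[OF that] by simp
  qed
  show "ent P i j = ent A ((unskip h \<circ> r) i) ((unskip k \<circ> c) j)"
    if "i \<in> {1..nrows P}" "j \<in> {1..ncols P}" for i j
    using that embedding_ent[OF rc] avoid by (simp add: ent_ins_rc)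
qed

definition no_zero_col :: "bmat \<Rightarrow> bool" where
  "no_zero_col P \<longleftrightarrow> (\<forall>j\<in>{1..ncols P}. \<exists>i\<in>{1..nrows P}. ent P i j)"

lemma embedding_zero_row_top_restrict:
  assumes rc: "embedding r c (zero_row_top P) B"
  shows "embedding r c P B"
proof (rule embeddingI)
  fix i j assume "i \<in> {1..nrows P}" "j \<in> {1..ncols P}"
  then show "ent P i j = ent B (r i) (c j)"
    using embedding_ent[OF rc, of i j] by (simp add: zero_row_top_def)
qed (use embedding_row_less[OF rc] embedding_col_less[OF rc] embedding_row_in[OF rc]
      embedding_col_in[OF rc] in auto)

lemma submatrix_zero_row_top_ins_rc_iff:
  assumes P: "no_zero_col P" and k: "k \<in> {1..ncols A + 1}"
  shows "submatrix (zero_row_top P) (ins_rc A (nrows A + 1) k) \<longleftrightarrow> submatrix P A"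
proof
  assume "submatrix (zero_row_top P) (ins_rc A (nrows A + 1) k)"
  then obtain r c where rc: "embedding r c (zero_row_top P) (ins_rc A (nrows A + 1) k)"
    unfolding submatrix_iff_embedding by blast
  have rc_P: "embedding r c P (ins_rc A (nrows A + 1) k)"
    using rc by (rule embedding_zero_row_top_restrict)
  have below_top: "r i \<noteq> nrows A + 1" if i: "i \<in> {1..nrows P}" for i
  proof -
    have "r i < r (nrows P + 1)"
      using i by (intro embedding_row_less[OF rc]) auto
    also have "r (nrows P + 1) \<le> nrows A + 1"
      using embedding_row_in[OF rc, of "nrows P + 1"] by simp
    finally show ?thesis by simp
  qed
  have not_k: "c j \<noteq> k" if j: "j \<in> {1..ncols P}" for j
  proof
    assume "c j = k"
    obtain i where i: "i \<in> {1..nrows P}" "ent P i j"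
      using P j unfolding no_zero_col_def by blast
    then have "ent (ins_rc A (nrows A + 1) k) (r i) (c j)"
      using embedding_ent[OF rc_P i(1) j] by simp
    with below_top[OF i(1)] \<open>c j = k\<close> show False
      by (simp add: ent_ins_rc)
  qed
  have "embedding (unskip (nrows A + 1) \<circ> r) (unskip k \<circ> c) P A"
    using embedding_ins_rc_avoiding[OF rc_P _ k below_top not_k] by simp
  then show "submatrix P A"
    unfolding submatrix_iff_embedding by blast
next
  assume "submatrix P A"
  then obtain r c where rc: "embedding r c P A"
    unfolding submatrix_iff_embedding by blast
  define r' where "r' i = (if i = nrows P + 1 then nrows A + 1 else r i)" for i
  have "embedding r' (skip k \<circ> c) (zero_row_top P) (ins_rc A (nrows A + 1) k)"
  proof (rule embeddingI)
    show "r' a < r' b" if "a \<in> {1..nrows (zero_row_top P)}" "b \<in> {1..nrows (zero_row_top P)}" "a < b"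
      for a b
    proof (cases "b = nrows P + 1")
      case True
      then show ?thesis using that embedding_row_in[OF rc, of a] unfolding r'_def by auto
    next
      case False
      then show ?thesis using that embedding_row_less[OF rc, of a b] unfolding r'_def by auto
    qed
    show "r' i \<in> {1..nrows (ins_rc A (nrows A + 1) k)}" if "i \<in> {1..nrows (zero_row_top P)}" for i
      using that embedding_row_in[OF rc, of i] unfolding r'_def by auto
    show "(skip k \<circ> c) a < (skip k \<circ> c) b"
      if "a \<in> {1..ncols (zero_row_top P)}" "b \<in> {1..ncols (zero_row_top P)}" "a < b" for a b
      using that embedding_col_less[OF rc, of a b] strict_mono_skip by (simp add: strict_mono_less)
    show "(skip k \<circ> c) j \<in> {1..ncols (ins_rc A (nrows A + 1) k)}"
      if "j \<in> {1..ncols (zero_row_top P)}" for j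
      using that skip_in[OF embedding_col_in[OF rc, of j]] by simp
    show "ent (zero_row_top P) i j = ent (ins_rc A (nrows A + 1) k) (r' i) ((skip k \<circ> c) j)"
      if "i \<in> {1..nrows (zero_row_top P)}" "j \<in> {1..ncols (zero_row_top P)}" for i j
      using that embedding_row_in[OF rc, of i] embedding_ent[OF rc, of i j] unfolding r'_def
      by (auto simp: zero_row_top_def ent_ins_rc skip_neq unskip_below)
  qed
  then show "submatrix (zero_row_top P) (ins_rc A (nrows A + 1) k)"
    unfolding submatrix_iff_embedding by blast
qed

definition bmat_flip :: "bmat \<Rightarrow> bmat" where
  "bmat_flip A = (nrows A, ncols A, \<lambda>i j. ent A (nrows A + 1 - i) j)"

lemma bmat_flip_sel [simp]:
  "nrows (bmat_flip A) = nrows A" "ncols (bmat_flip A) = ncols A"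
  "ent (bmat_flip A) i j = ent A (nrows A + 1 - i) j"
  by (simp_all add: bmat_flip_def)

lemma reflect_in: "i \<in> {1..n} \<Longrightarrow> n + 1 - i \<in> {1..n::nat}"
  by auto

lemma embedding_flip:
  assumes rc: "embedding r c A B"
  shows "embedding (\<lambda>i. nrows B + 1 - r (nrows A + 1 - i)) c (bmat_flip A) (bmat_flip B)"
proof (rule embeddingI)
  show "nrows B + 1 - r (nrows A + 1 - a) < nrows B + 1 - r (nrows A + 1 - b)"
    if "a \<in> {1..nrows (bmat_flip A)}" "b \<in> {1..nrows (bmat_flip A)}" "a < b" for a b
  proof -
    have "r (nrows A + 1 - b) < r (nrows A + 1 - a)"
      using that by (intro embedding_row_less[OF rc]) auto
    moreover have "r (nrows A + 1 - a) \<in> {1..nrows B}"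
      using that by (intro embedding_row_in[OF rc] reflect_in) simp
    ultimately show ?thesis by simp
  qed
  show "nrows B + 1 - r (nrows A + 1 - i) \<in> {1..nrows (bmat_flip B)}"
    if "i \<in> {1..nrows (bmat_flip A)}" for i
  proof -
    have "r (nrows A + 1 - i) \<in> {1..nrows B}"
      using that by (intro embedding_row_in[OF rc] reflect_in) simp
    then show ?thesis by auto
  qed
  show "ent (bmat_flip A) i j = ent (bmat_flip B) (nrows B + 1 - r (nrows A + 1 - i)) (c j)"
    if "i \<in> {1..nrows (bmat_flip A)}" "j \<in> {1..ncols (bmat_flip A)}" for i j
  proof -
    have "r (nrows A + 1 - i) \<in> {1..nrows B}"
      using that by (intro embedding_row_in[OF rc] reflect_in) simp
    then show ?thesis
      using that embedding_ent[OF rc reflect_in] by (simp add: Suc_diff_le)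
  qed
qed (use embedding_col_less[OF rc] embedding_col_in[OF rc] in auto)

lemma bmat_flip_flip: "mat_eq (bmat_flip (bmat_flip A)) A"
  by (auto simp: mat_eq_def)

lemma submatrix_flip_iff: "submatrix (bmat_flip A) (bmat_flip B) \<longleftrightarrow> submatrix A B"
proof
  assume "submatrix (bmat_flip A) (bmat_flip B)"
  then have "submatrix (bmat_flip (bmat_flip A)) (bmat_flip (bmat_flip B))"
    unfolding submatrix_iff_embedding using embedding_flip by blast
  then show "submatrix A B"
    using submatrix_mat_eq_cong[OF bmat_flip_flip bmat_flip_flip] by blast
qed (unfold submatrix_iff_embedding, use embedding_flip in blast)

lemma bmat_flip_zero_row_bottom:
  "mat_eq (bmat_flip (zero_row_bottom P)) (zero_row_top (bmat_flip P))"
  by (auto simp: mat_eq_def zero_row_bottom_def zero_row_top_def Suc_diff_le)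

lemma bmat_flip_ins_rc_bottom:
  "mat_eq (bmat_flip (ins_rc A 1 k)) (ins_rc (bmat_flip A) (nrows A + 1) k)"
  by (auto simp: mat_eq_def ent_ins_rc unskip_def Suc_diff_le)

lemma no_zero_col_flip:
  assumes "no_zero_col P"
  shows "no_zero_col (bmat_flip P)"
  unfolding no_zero_col_def
proof
  fix j assume "j \<in> {1..ncols (bmat_flip P)}"
  then have "j \<in> {1..ncols P}" by simp
  then obtain i where "i \<in> {1..nrows P}" "ent P i j"
    using assms unfolding no_zero_col_def by blast
  then show "\<exists>i\<in>{1..nrows (bmat_flip P)}. ent (bmat_flip P) i j"
    by (intro bexI[of _ "nrows P + 1 - i"]) (auto simp: Suc_diff_le)
qed

definition bmat_transpose :: "bmat \<Rightarrow> bmat" where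
  "bmat_transpose A = (ncols A, nrows A, \<lambda>i j. ent A j i)"

lemma bmat_transpose_sel [simp]:
  "nrows (bmat_transpose A) = ncols A" "ncols (bmat_transpose A) = nrows A"
  "ent (bmat_transpose A) i j = ent A j i"
  by (simp_all add: bmat_transpose_def)

lemma bmat_transpose_transpose [simp]: "bmat_transpose (bmat_transpose A) = A"
  by (simp add: bmat_transpose_def nrows_def ncols_def ent_def)

lemma embedding_transpose: "embedding r c A B \<Longrightarrow> embedding c r (bmat_transpose A) (bmat_transpose B)"
  unfolding embedding_def by auto

lemma submatrix_transpose_iff: "submatrix (bmat_transpose A) (bmat_transpose B) \<longleftrightarrow> submatrix A B"
  by (metis embedding_transpose bmat_transpose_transpose submatrix_iff_embedding)

lemma bmat_transpose_ins_rc: "bmat_transpose (ins_rc A h k) = ins_rc (bmat_transpose A) k h"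
  by (auto simp: bmat_transpose_def ins_rc_def fun_eq_iff)

lemma bmat_transpose_zero_col_right: "bmat_transpose (zero_col_right P) = zero_row_top (bmat_transpose P)"
  by (auto simp: bmat_transpose_def zero_col_right_def zero_row_top_def fun_eq_iff)

lemma bmat_transpose_zero_col_left: "bmat_transpose (zero_col_left P) = zero_row_bottom (bmat_transpose P)"
  by (auto simp: bmat_transpose_def zero_col_left_def zero_row_bottom_def fun_eq_iff)

lemma submatrix_zero_row_bottom_ins_rc_iff:
  assumes "no_zero_col P" and "k \<in> {1..ncols A + 1}"
  shows "submatrix (zero_row_bottom P) (ins_rc A 1 k) \<longleftrightarrow> submatrix P A"
proof -
  have "submatrix (zero_row_bottom P) (ins_rc A 1 k) \<longleftrightarrow>
      submatrix (bmat_flip (zero_row_bottom P)) (bmat_flip (ins_rc A 1 k))"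
    by (rule submatrix_flip_iff[symmetric])
  also have "\<dots> \<longleftrightarrow> submatrix (zero_row_top (bmat_flip P)) (ins_rc (bmat_flip A) (nrows (bmat_flip A) + 1) k)"
    using submatrix_mat_eq_cong[OF bmat_flip_zero_row_bottom bmat_flip_ins_rc_bottom] by simp
  also have "\<dots> \<longleftrightarrow> submatrix (bmat_flip P) (bmat_flip A)"
    using submatrix_zero_row_top_ins_rc_iff[OF no_zero_col_flip, of P k "bmat_flip A"] assms by simp
  also have "\<dots> \<longleftrightarrow> submatrix P A"
    by (rule submatrix_flip_iff)
  finally show ?thesis .
qed

lemma submatrix_zero_col_right_ins_rc_iff:
  assumes "no_zero_col (bmat_transpose P)" and "h \<in> {1..nrows A + 1}"
  shows "submatrix (zero_col_right P) (ins_rc A h (ncols A + 1)) \<longleftrightarrow> submatrix P A"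
proof -
  have "submatrix (zero_col_right P) (ins_rc A h (ncols A + 1)) \<longleftrightarrow>
      submatrix (bmat_transpose (zero_col_right P)) (bmat_transpose (ins_rc A h (ncols A + 1)))"
    by (rule submatrix_transpose_iff[symmetric])
  also have "\<dots> \<longleftrightarrow> submatrix (bmat_transpose P) (bmat_transpose A)"
    using submatrix_zero_row_top_ins_rc_iff[of "bmat_transpose P" h "bmat_transpose A"] assms
    by (simp add: bmat_transpose_zero_col_right bmat_transpose_ins_rc)
  finally show ?thesis
    by (simp add: submatrix_transpose_iff)
qed

lemma submatrix_zero_col_left_ins_rc_iff:
  assumes "no_zero_col (bmat_transpose P)" and "h \<in> {1..nrows A + 1}"
  shows "submatrix (zero_col_left P) (ins_rc A h 1) \<longleftrightarrow> submatrix P A"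
proof -
  have "submatrix (zero_col_left P) (ins_rc A h 1) \<longleftrightarrow>
      submatrix (bmat_transpose (zero_col_left P)) (bmat_transpose (ins_rc A h 1))"
    by (rule submatrix_transpose_iff[symmetric])
  also have "\<dots> \<longleftrightarrow> submatrix (bmat_transpose P) (bmat_transpose A)"
    using submatrix_zero_row_bottom_ins_rc_iff[of "bmat_transpose P" h "bmat_transpose A"] assms
    by (simp add: bmat_transpose_zero_col_left bmat_transpose_ins_rc)
  finally show ?thesis
    by (simp add: submatrix_transpose_iff)
qed

lemma no_zero_col_pmat: "\<tau> permutes {1..m} \<Longrightarrow> no_zero_col (pmat m \<tau>)"
  unfolding no_zero_col_def by (auto dest: permutes_in_image)

lemma no_zero_col_transpose_pmat: "\<tau> permutes {1..m} \<Longrightarrow> no_zero_col (bmat_transpose (pmat m \<tau>))"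
  unfolding no_zero_col_def by (auto dest!: permutes_image)

text \<open>\<open>perm_delete n k \<sigma>\<close> is \<sigma> with the point \<open>(k, \<sigma> k)\<close> removed from its graph and the
  remaining positions and values renumbered.\<close>

definition perm_delete :: "nat \<Rightarrow> nat \<Rightarrow> (nat \<Rightarrow> nat) \<Rightarrow> nat \<Rightarrow> nat" where
  "perm_delete n k \<sigma> j = (if j \<in> {1..n} then unskip (\<sigma> k) (\<sigma> (skip k j)) else j)"

lemma perm_delete_permutes:
  assumes \<sigma>: "\<sigma> permutes {1..n + 1}" and k: "k \<in> {1..n + 1}"
  shows "perm_delete n k \<sigma> permutes {1..n}"
proof (rule bij_imp_permutes)
  have skip_k: "skip k j \<in> {1..n + 1}" "\<sigma> (skip k j) \<noteq> \<sigma> k" if "j \<in> {1..n}" for j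
    using skip_in[OF that] skip_neq permutes_inj[OF \<sigma>] by (auto dest: injD)
  have \<sigma>k: "\<sigma> k \<in> {1..n + 1}"
    using permutes_in_image[OF \<sigma>] k by simp
  have "perm_delete n k \<sigma> ` {1..n} \<subseteq> {1..n}"
    using unskip_in[OF permutes_in_image[OF \<sigma>, THEN iffD2] \<sigma>k] skip_k
    by (auto simp: perm_delete_def)
  moreover have "inj_on (perm_delete n k \<sigma>) {1..n}"
  proof (rule inj_onI)
    fix a b assume ab: "a \<in> {1..n}" "b \<in> {1..n}" "perm_delete n k \<sigma> a = perm_delete n k \<sigma> b"
    then have "\<sigma> (skip k a) = \<sigma> (skip k b)"
      using skip_k unskip_eq_iff by (simp add: perm_delete_def)
    then show "a = b"
      using permutes_inj[OF \<sigma>] strict_mono_skip by (metis injD strict_mono_eq)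
  qed
  ultimately show "bij_betw (perm_delete n k \<sigma>) {1..n} {1..n}"
    by (simp add: bij_betw_def endo_inj_surj)
qed (auto simp: perm_delete_def)

lemma pmat_mat_eq_ins_rc_perm_delete:
  assumes \<sigma>: "\<sigma> permutes {1..n + 1}" and k: "k \<in> {1..n + 1}"
  shows "mat_eq (pmat (n + 1) \<sigma>) (ins_rc (pmat n (perm_delete n k \<sigma>)) (\<sigma> k) k)"
  unfolding mat_eq_def
proof (intro conjI ballI)
  fix i j assume "i \<in> {1..nrows (pmat (n + 1) \<sigma>)}" "j \<in> {1..ncols (pmat (n + 1) \<sigma>)}"
  then have i: "i \<in> {1..n + 1}" and j: "j \<in> {1..n + 1}"
    by simp_all
  have inj: "\<sigma> j = \<sigma> k \<longleftrightarrow> j = k"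
    using permutes_inj[OF \<sigma>] by (auto dest: injD)
  show "ent (pmat (n + 1) \<sigma>) i j = ent (ins_rc (pmat n (perm_delete n k \<sigma>)) (\<sigma> k) k) i j"
  proof (cases "i = \<sigma> k \<or> j = k")
    case True
    then show ?thesis using inj by (auto simp: ent_ins_rc)
  next
    case False
    have "unskip k j \<in> {1..n}"
      using unskip_in[OF j k] False by simp
    then have "perm_delete n k \<sigma> (unskip k j) = unskip (\<sigma> k) (\<sigma> j)"
      using False by (simp add: perm_delete_def skip_unskip)
    then show ?thesis
      using False inj unskip_eq_iff[of i "\<sigma> k" "\<sigma> j"] by (auto simp: ent_ins_rc)
  qed
qed simp_all

text \<open>\<open>S n\<close> is the set of admissible positions (row, column) of the inserted 1.\<close>

lemma Av_eq_insertions: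
  assumes contains_iff: "\<And>n \<sigma>' h k. \<sigma>' permutes {1..n} \<Longrightarrow> (h, k) \<in> S n \<Longrightarrow>
        submatrix Z (ins_rc (pmat n \<sigma>') h k) \<longleftrightarrow> contains n \<sigma>' m \<tau>"
    and cover: "\<And>n \<sigma>. \<sigma> permutes {1..n + 1} \<Longrightarrow> \<exists>k\<in>{1..n + 1}. (\<sigma> k, k) \<in> S n"
  shows "Av Z = {(n + 1, \<sigma>) | n \<sigma> \<sigma>' h k. \<sigma> permutes {1..n + 1} \<and> \<sigma>' permutes {1..n} \<and>
      avoids n \<sigma>' m \<tau> \<and> (h, k) \<in> S n \<and> mat_eq (pmat (n + 1) \<sigma>) (ins_rc (pmat n \<sigma>') h k)}"
    (is "_ = ?R")
proof
  show "Av Z \<subseteq> ?R"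
  proof
    fix x assume "x \<in> Av Z"
    then obtain N \<sigma> where x: "x = (N, \<sigma>)" "N \<ge> 1"
      and \<sigma>: "\<sigma> permutes {1..N}" and Z: "\<not> submatrix Z (pmat N \<sigma>)"
      unfolding Av_def by blast
    obtain n where N: "N = n + 1"
      using x(2) by (metis add.commute le_Suc_ex)
    note x = x(1)[unfolded N] and \<sigma> = \<sigma>[unfolded N] and Z = Z[unfolded N]
    obtain k where k: "k \<in> {1..n + 1}" "(\<sigma> k, k) \<in> S n"
      using cover[OF \<sigma>] by blast
    have \<sigma>': "perm_delete n k \<sigma> permutes {1..n}"
      using perm_delete_permutes[OF \<sigma> k(1)] .
    have eq: "mat_eq (pmat (n + 1) \<sigma>) (ins_rc (pmat n (perm_delete n k \<sigma>)) (\<sigma> k) k)"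
      using pmat_mat_eq_ins_rc_perm_delete[OF \<sigma> k(1)] .
    have "avoids n (perm_delete n k \<sigma>) m \<tau>"
      using Z contains_iff[OF \<sigma>' k(2)] submatrix_mat_eq_cong[OF mat_eq_refl eq]
      unfolding avoids_def by simp
    then show "x \<in> ?R"
      using x \<sigma> \<sigma>' k(2) eq by blast
  qed
  show "?R \<subseteq> Av Z"
  proof
    fix x assume "x \<in> ?R"
    then obtain n \<sigma> \<sigma>' h k where x: "x = (n + 1, \<sigma>)" and \<sigma>: "\<sigma> permutes {1..n + 1}"
      and \<sigma>': "\<sigma>' permutes {1..n}" "avoids n \<sigma>' m \<tau>" and hk: "(h, k) \<in> S n"
      and eq: "mat_eq (pmat (n + 1) \<sigma>) (ins_rc (pmat n \<sigma>') h k)"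
      by blast
    have "\<not> submatrix Z (pmat (n + 1) \<sigma>)"
      using \<sigma>' contains_iff[OF \<sigma>'(1) hk] submatrix_mat_eq_cong[OF mat_eq_refl eq]
      unfolding avoids_def by simp
    then show "x \<in> Av Z"
      using x \<sigma> unfolding Av_def by simp
  qed
qed

lemma permutes_preimage: "\<sigma> permutes A \<Longrightarrow> v \<in> A \<Longrightarrow> \<exists>k\<in>A. \<sigma> k = v"
  by (metis imageE permutes_image)

lemma Av_zero_row_top_pmat:
  assumes "\<tau> permutes {1..m}"
  shows "Av (zero_row_top (pmat m \<tau>)) = add_max_set m \<tau>"
proof -
  have "Av (zero_row_top (pmat m \<tau>)) = {(n + 1, \<sigma>) | n \<sigma> \<sigma>' h k. \<sigma> permutes {1..n + 1} \<and>
      \<sigma>' permutes {1..n} \<and> avoids n \<sigma>' m \<tau> \<and> (h, k) \<in> {n + 1} \<times> {1..n + 1} \<and>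
      mat_eq (pmat (n + 1) \<sigma>) (ins_rc (pmat n \<sigma>') h k)}"
  proof (rule Av_eq_insertions)
    show "submatrix (zero_row_top (pmat m \<tau>)) (ins_rc (pmat n \<sigma>') h k) \<longleftrightarrow> contains n \<sigma>' m \<tau>"
      if "(h, k) \<in> {n + 1} \<times> {1..n + 1}" for n \<sigma>' h k
      using that submatrix_zero_row_top_ins_rc_iff[OF no_zero_col_pmat[OF assms], of k "pmat n \<sigma>'"]
      by (auto simp: contains_def)
  qed (use permutes_preimage in force)
  then show ?thesis
    unfolding add_max_set_def by blast
qed

lemma Av_zero_row_bottom_pmat:
  assumes "\<tau> permutes {1..m}"
  shows "Av (zero_row_bottom (pmat m \<tau>)) = add_min_set m \<tau>"
proof -
  have "Av (zero_row_bottom (pmat m \<tau>)) = {(n + 1, \<sigma>) | n \<sigma> \<sigma>' h k. \<sigma> permutes {1..n + 1} \<and>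
      \<sigma>' permutes {1..n} \<and> avoids n \<sigma>' m \<tau> \<and> (h, k) \<in> {1} \<times> {1..n + 1} \<and>
      mat_eq (pmat (n + 1) \<sigma>) (ins_rc (pmat n \<sigma>') h k)}"
  proof (rule Av_eq_insertions)
    show "submatrix (zero_row_bottom (pmat m \<tau>)) (ins_rc (pmat n \<sigma>') h k) \<longleftrightarrow> contains n \<sigma>' m \<tau>"
      if "(h, k) \<in> {1} \<times> {1..n + 1}" for n \<sigma>' h k
      using that submatrix_zero_row_bottom_ins_rc_iff[OF no_zero_col_pmat[OF assms], of k "pmat n \<sigma>'"]
      by (auto simp: contains_def)
  qed (use permutes_preimage in force)
  then show ?thesis
    unfolding add_min_set_def by blast
qed

lemma Av_zero_col_right_pmat:
  assumes "\<tau> permutes {1..m}"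
  shows "Av (zero_col_right (pmat m \<tau>)) = add_last_set m \<tau>"
proof -
  have "Av (zero_col_right (pmat m \<tau>)) = {(n + 1, \<sigma>) | n \<sigma> \<sigma>' h k. \<sigma> permutes {1..n + 1} \<and>
      \<sigma>' permutes {1..n} \<and> avoids n \<sigma>' m \<tau> \<and> (h, k) \<in> {1..n + 1} \<times> {n + 1} \<and>
      mat_eq (pmat (n + 1) \<sigma>) (ins_rc (pmat n \<sigma>') h k)}"
  proof (rule Av_eq_insertions)
    show "submatrix (zero_col_right (pmat m \<tau>)) (ins_rc (pmat n \<sigma>') h k) \<longleftrightarrow> contains n \<sigma>' m \<tau>"
      if "(h, k) \<in> {1..n + 1} \<times> {n + 1}" for n \<sigma>' h k
      using that submatrix_zero_col_right_ins_rc_iff[OF no_zero_col_transpose_pmat[OF assms], of h "pmat n \<sigma>'"]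
      by (auto simp: contains_def)
  qed (use permutes_in_image in force)
  then show ?thesis
    unfolding add_last_set_def by blast
qed

lemma Av_zero_col_left_pmat:
  assumes "\<tau> permutes {1..m}"
  shows "Av (zero_col_left (pmat m \<tau>)) = add_first_set m \<tau>"
proof -
  have "Av (zero_col_left (pmat m \<tau>)) = {(n + 1, \<sigma>) | n \<sigma> \<sigma>' h k. \<sigma> permutes {1..n + 1} \<and>
      \<sigma>' permutes {1..n} \<and> avoids n \<sigma>' m \<tau> \<and> (h, k) \<in> {1..n + 1} \<times> {1} \<and>
      mat_eq (pmat (n + 1) \<sigma>) (ins_rc (pmat n \<sigma>') h k)}"
  proof (rule Av_eq_insertions)
    show "submatrix (zero_col_left (pmat m \<tau>)) (ins_rc (pmat n \<sigma>') h k) \<longleftrightarrow> contains n \<sigma>' m \<tau>"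
      if "(h, k) \<in> {1..n + 1} \<times> {1}" for n \<sigma>' h k
      using that submatrix_zero_col_left_ins_rc_iff[OF no_zero_col_transpose_pmat[OF assms], of h "pmat n \<sigma>'"]
      by (auto simp: contains_def)
  qed (use permutes_in_image in force)
  then show ?thesis
    unfolding add_first_set_def by blast
qed

theorem proposition11:
  fixes \<tau> :: "nat \<Rightarrow> nat" and m :: nat
  assumes "\<tau> permutes {1..m}"
  shows "Av (zero_row_top (pmat m \<tau>)) = add_max_set m \<tau> \<and>
     Av (zero_row_bottom (pmat m \<tau>)) = add_min_set m \<tau> \<and>
     Av (zero_col_right (pmat m \<tau>)) = add_last_set m \<tau> \<and>
     Av (zero_col_left (pmat m \<tau>)) = add_first_set m \<tau>"
  using Av_zero_row_top_pmat[OF assms] Av_zero_row_bottom_pmat[OF assms]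
    Av_zero_col_right_pmat[OF assms] Av_zero_col_left_pmat[OF assms] by blast

end
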